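(* Let $A$ be a sequence algebra and $P$ a homogeneous normed $A$-module of finite type such that for every $n\in\mathbb N$ the coordinate subspace $P_n$ is isometrically isomorphic to $l_1^0(\Lambda_n)$ for some index set $\Lambda_n$. Then $P$ is extremely projective with respect to $\mathcal H$.
   Context: All normed algebras and modules are contractive ($\|ab\|\le\|a\|\|b\|$, $\|a\cdot x\|\le\|a\|\|x\|$), not necessarily complete; morphisms are bounded $A$-module maps. A morphism $\tau:Y\to X$ is coisometric if $\|\tau\|\le1$ and for every $x\in X$, $\varepsilon>0$ there is $y$ with $\tau(y)=x$, $\|y\|<\|x\|+\varepsilon$. $P$ is extremely projective with respect to a full subcategory $\mathcal K$ if for every coisometric morphism $\tau:Y\to X$ with $X,Y\in\mathcal K$, every bounded morphism $\varphi:P\to X$ and $\varepsilon>0$ there is a morphism $\psi:P\to Y$ with $\tau\psi=\varphi$ and $\|\psi\|<\|\varphi\|+\varepsilon$. $l_1^0(\Lambda)$: finitely supported functions on $\Lambda$ with the $l_1$-norm. A sequence algebra is a normed algebra of complex sequences with coordinatewise operations containing $c_{00}$ as a dense subalgebra, with $\|\mathbf p^n\|=1$, where $\mathbf p^n$ has $1$ in place $n$ and $0$ elsewhere. $x_n:=\mathbf p^n\cdot x$, $X_n:=\{\mathbf p^n\cdot x\}$. Essential: closed span of $\{a\cdot x\}$ is $X$. Homogeneous: $\|x_n\|\le\|y_n\|$ for all $n$ implies $\|x\|\le\|y\|$. Finite type: for each $x$, $x_n=0$ for large $n$. $\mathcal H$ is the full subcategory of essential homogeneous normed $A$-modules. 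*)

theory Defs
  imports "HOL-Analysis.Analysis"
begin

text \<open>Complex normed spaces are modelled as a type of class real_normed_vector
  (fixing the underlying real normed space) together with an explicit complex
  scalar multiplication compatible with the real one.\<close>

definition complex_normed_space :: "(complex \<Rightarrow> 'x::real_normed_vector \<Rightarrow> 'x) \<Rightarrow> bool" where
  "complex_normed_space sm \<longleftrightarrow>
     (\<forall>r x. sm (complex_of_real r) x = r *\<^sub>R x) \<and>
     (\<forall>c d x. sm (c * d) x = sm c (sm d x)) \<and>
     (\<forall>c d x. sm (c + d) x = sm c x + sm d x) \<and>
     (\<forall>c x y. sm c (x + y) = sm c x + sm c y) \<and>
     (\<forall>c x. norm (sm c x) = cmod c * norm x)"

definition pn :: "nat \<Rightarrow> nat \<Rightarrow> complex" where
  "pn n = (\<lambda>k. if k = n then 1 else 0)"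

definition finsupp_seq :: "(nat \<Rightarrow> complex) \<Rightarrow> bool" where
  "finsupp_seq a \<longleftrightarrow> finite {k. a k \<noteq> 0}"

definition sequence_algebra :: "(nat \<Rightarrow> complex) set \<Rightarrow> ((nat \<Rightarrow> complex) \<Rightarrow> real) \<Rightarrow> bool" where
  "sequence_algebra A nA \<longleftrightarrow>
     (\<lambda>k. 0) \<in> A \<and>
     (\<forall>a\<in>A. \<forall>b\<in>A. (\<lambda>k. a k + b k) \<in> A) \<and>
     (\<forall>a\<in>A. \<forall>b\<in>A. (\<lambda>k. a k * b k) \<in> A) \<and>
     (\<forall>c. \<forall>a\<in>A. (\<lambda>k. c * a k) \<in> A) \<and>
     (\<forall>a\<in>A. nA a \<ge> 0) \<and>
     (\<forall>a\<in>A. nA a = 0 \<longleftrightarrow> a = (\<lambda>k. 0)) \<and>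
     (\<forall>a\<in>A. \<forall>b\<in>A. nA (\<lambda>k. a k + b k) \<le> nA a + nA b) \<and>
     (\<forall>c. \<forall>a\<in>A. nA (\<lambda>k. c * a k) = cmod c * nA a) \<and>
     (\<forall>a\<in>A. \<forall>b\<in>A. nA (\<lambda>k. a k * b k) \<le> nA a * nA b) \<and>
     {a. finsupp_seq a} \<subseteq> A \<and>
     (\<forall>a\<in>A. \<forall>e>0. \<exists>b. finsupp_seq b \<and> nA (\<lambda>k. a k - b k) < e) \<and>
     (\<forall>n. nA (pn n) = 1)"

definition normed_module ::
  "(nat \<Rightarrow> complex) set \<Rightarrow> ((nat \<Rightarrow> complex) \<Rightarrow> real) \<Rightarrow>
   (complex \<Rightarrow> 'x::real_normed_vector \<Rightarrow> 'x) \<Rightarrow> ((nat \<Rightarrow> complex) \<Rightarrow> 'x \<Rightarrow> 'x) \<Rightarrow> bool" where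
  "normed_module A nA sm act \<longleftrightarrow>
     complex_normed_space sm \<and>
     (\<forall>a\<in>A. \<forall>x y. act a (x + y) = act a x + act a y) \<and>
     (\<forall>a\<in>A. \<forall>c x. act a (sm c x) = sm c (act a x)) \<and>
     (\<forall>a\<in>A. \<forall>b\<in>A. \<forall>x. act (\<lambda>k. a k + b k) x = act a x + act b x) \<and>
     (\<forall>a\<in>A. \<forall>c x. act (\<lambda>k. c * a k) x = sm c (act a x)) \<and>
     (\<forall>a\<in>A. \<forall>b\<in>A. \<forall>x. act (\<lambda>k. a k * b k) x = act a (act b x)) \<and>
     (\<forall>a\<in>A. \<forall>x. norm (act a x) \<le> nA a * norm x)"

definition module_morphism ::
  "(nat \<Rightarrow> complex) set \<Rightarrow>
   (complex \<Rightarrow> 'x::real_normed_vector \<Rightarrow> 'x) \<Rightarrow> ((nat \<Rightarrow> complex) \<Rightarrow> 'x \<Rightarrow> 'x) \<Rightarrow>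
   (complex \<Rightarrow> 'y::real_normed_vector \<Rightarrow> 'y) \<Rightarrow> ((nat \<Rightarrow> complex) \<Rightarrow> 'y \<Rightarrow> 'y) \<Rightarrow>
   ('x \<Rightarrow> 'y) \<Rightarrow> bool" where
  "module_morphism A smX actX smY actY f \<longleftrightarrow>
     bounded_linear f \<and>
     (\<forall>c x. f (smX c x) = smY c (f x)) \<and>
     (\<forall>a\<in>A. \<forall>x. f (actX a x) = actY a (f x))"

definition coisometric :: "('y::real_normed_vector \<Rightarrow> 'x::real_normed_vector) \<Rightarrow> bool" where
  "coisometric \<tau> \<longleftrightarrow> onorm \<tau> \<le> 1 \<and>
     (\<forall>x. \<forall>e>0. \<exists>y. \<tau> y = x \<and> norm y < norm x + e)"

definition essential_module ::
  "(nat \<Rightarrow> complex) set \<Rightarrow> ((nat \<Rightarrow> complex) \<Rightarrow> 'x::real_normed_vector \<Rightarrow> 'x) \<Rightarrow> bool" where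
  "essential_module A act \<longleftrightarrow> closure (span {act a x | a x. a \<in> A}) = UNIV"

definition homogeneous_module :: "((nat \<Rightarrow> complex) \<Rightarrow> 'x::real_normed_vector \<Rightarrow> 'x) \<Rightarrow> bool" where
  "homogeneous_module act \<longleftrightarrow>
     (\<forall>x y. (\<forall>n. norm (act (pn n) x) \<le> norm (act (pn n) y)) \<longrightarrow> norm x \<le> norm y)"

definition finite_type_module :: "((nat \<Rightarrow> complex) \<Rightarrow> 'x::real_normed_vector \<Rightarrow> 'x) \<Rightarrow> bool" where
  "finite_type_module act \<longleftrightarrow> (\<forall>x. \<exists>N. \<forall>n\<ge>N. act (pn n) x = 0)"

definition l10 :: "'l set \<Rightarrow> ('l \<Rightarrow> complex) set" where
  "l10 \<Lambda> = {f. finite {i. f i \<noteq> 0} \<and> (\<forall>i. i \<notin> \<Lambda> \<longrightarrow> f i = 0)}"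

definition l1norm :: "('l \<Rightarrow> complex) \<Rightarrow> real" where
  "l1norm f = (\<Sum>i\<in>{i. f i \<noteq> 0}. cmod (f i))"

definition isometric_iso_l10 ::
  "(complex \<Rightarrow> 'x::real_normed_vector \<Rightarrow> 'x) \<Rightarrow> 'x set \<Rightarrow> 'l set \<Rightarrow> bool" where
  "isometric_iso_l10 sm S \<Lambda> \<longleftrightarrow>
     (\<exists>T. bij_betw T S (l10 \<Lambda>) \<and>
          (\<forall>x\<in>S. \<forall>y\<in>S. T (x + y) = (\<lambda>i. T x i + T y i)) \<and>
          (\<forall>c. \<forall>x\<in>S. T (sm c x) = (\<lambda>i. c * T x i)) \<and>
          (\<forall>x\<in>S. l1norm (T x) = norm x))"

text \<open>Quantification over all X, Y is
  obtained in the theorem via the free type variables of X and Y.\<close>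
definition extremely_projective_wrt ::
  "(nat \<Rightarrow> complex) set \<Rightarrow> ((nat \<Rightarrow> complex) \<Rightarrow> real) \<Rightarrow>
   (complex \<Rightarrow> 'p::real_normed_vector \<Rightarrow> 'p) \<Rightarrow> ((nat \<Rightarrow> complex) \<Rightarrow> 'p \<Rightarrow> 'p) \<Rightarrow>
   (complex \<Rightarrow> 'x::real_normed_vector \<Rightarrow> 'x) \<Rightarrow> ((nat \<Rightarrow> complex) \<Rightarrow> 'x \<Rightarrow> 'x) \<Rightarrow>
   (complex \<Rightarrow> 'y::real_normed_vector \<Rightarrow> 'y) \<Rightarrow> ((nat \<Rightarrow> complex) \<Rightarrow> 'y \<Rightarrow> 'y) \<Rightarrow> bool" where
  "extremely_projective_wrt A nA smP actP smX actX smY actY \<longleftrightarrow>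
     (\<forall>\<tau> \<phi> e. module_morphism A smY actY smX actX \<tau> \<and> coisometric \<tau> \<and>
        module_morphism A smP actP smX actX \<phi> \<and> e > 0 \<longrightarrow>
        (\<exists>\<psi>. module_morphism A smP actP smY actY \<psi> \<and> \<tau> \<circ> \<psi> = \<phi> \<and>
             onorm \<psi> < onorm \<phi> + e))"

end

theory Submission
  imports Defs
begin

text \<open>Let tau : Y -> X be a coisometric morphism, phi : P -> X a morphism and
  delta > 0.  Every coordinate space P_n is an l_1^0(Lambda_n) with unit basis
  e_{n,l}.  Since tau is coisometric, each phi(e_{n,l}), which lies in X_n, has
  a preimage y_{n,l} in Y_n of norm at most (1 + delta) |phi(e_{n,l})|.
  Extending l |-> y_{n,l} linearly on every P_n and summing over the finitely
  many nonzero coordinates of x (finite type) yields a module morphism psi with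
  tau o psi = phi.  For the norm estimate, in every coordinate we replace x_n by
  |x_n| times the basis vector maximising |phi(e_{n,l})| on the support of x_n;
  the resulting x' has coordinates of the same norms as x, hence |x'| <= |x| by
  homogeneity of P.  A near-optimal preimage w of phi(x') dominates
  psi(x) / (1 + delta) coordinatewise, so homogeneity of Y gives
  |psi x| <= (1 + delta) |phi| |x|; choosing delta small finishes the proof.\<close>

lemma pn_finsupp: "finsupp_seq (pn n)"
  unfolding finsupp_seq_def pn_def by simp

lemma pn_mult: "(\<lambda>k. pn m k * pn n k) = (if m = n then pn n else (\<lambda>k. 0))"
  by (auto simp: pn_def)

locale seq_module =
  fixes A :: "(nat \<Rightarrow> complex) set" and nA :: "(nat \<Rightarrow> complex) \<Rightarrow> real"
    and sm :: "complex \<Rightarrow> 'x::real_normed_vector \<Rightarrow> 'x" and act :: "(nat \<Rightarrow> complex) \<Rightarrow> 'x \<Rightarrow> 'x"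
  assumes seq_alg: "sequence_algebra A nA" and module: "normed_module A nA sm act"
begin

lemma complex_space: "complex_normed_space sm"
  using module unfolding normed_module_def by blast

lemma sm_real: "sm (complex_of_real r) x = r *\<^sub>R x"
  and sm_mult: "sm (c * d) x = sm c (sm d x)"
  and sm_addl: "sm (c + d) x = sm c x + sm d x"
  and sm_addr: "sm c (x + y) = sm c x + sm c y"
  and sm_norm: "norm (sm c x) = cmod c * norm x"
  using complex_space unfolding complex_normed_space_def by blast+

lemma sm_zero_left [simp]: "sm 0 x = 0"
  using sm_norm[of 0 x] by simp

lemma sm_zero_right [simp]: "sm c 0 = 0"
  using sm_norm[of c 0] by simp

lemma sm_sum: "sm c (sum f F) = (\<Sum>i\<in>F. sm c (f i))"
  by (induction F rule: infinite_finite_induct) (auto simp: sm_addr)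

lemma pn_in_A: "pn n \<in> A"
  using seq_alg pn_finsupp unfolding sequence_algebra_def by blast

lemma act_add: "a \<in> A \<Longrightarrow> act a (x + y) = act a x + act a y"
  and act_sm: "a \<in> A \<Longrightarrow> act a (sm c x) = sm c (act a x)"
  and act_scal: "a \<in> A \<Longrightarrow> act (\<lambda>k. c * a k) x = sm c (act a x)"
  and act_mult: "a \<in> A \<Longrightarrow> b \<in> A \<Longrightarrow> act (\<lambda>k. a k * b k) x = act a (act b x)"
  and act_norm: "a \<in> A \<Longrightarrow> norm (act a x) \<le> nA a * norm x"
  using module unfolding normed_module_def by blast+

lemma act_zero [simp]: "a \<in> A \<Longrightarrow> act a 0 = 0"
  using act_add[of a 0 0] by simp

lemma act_diff: "a \<in> A \<Longrightarrow> act a (x - y) = act a x - act a y"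
  using act_add[of a "x - y" y] by (simp add: algebra_simps)

lemma act_sum: "a \<in> A \<Longrightarrow> act a (sum f F) = (\<Sum>i\<in>F. act a (f i))"
  by (induction F rule: infinite_finite_induct) (auto simp: act_add)

lemma act_zero_seq: "act (\<lambda>k. 0) x = 0"
  using act_scal[OF pn_in_A, of 0 0 x] by simp

lemma act_pn_pn: "act (pn m) (act (pn n) x) = (if m = n then act (pn n) x else 0)"
  using act_mult[OF pn_in_A pn_in_A, of m n x] by (auto simp: pn_mult act_zero_seq)

lemma act_pn_idem [simp]: "act (pn n) (act (pn n) x) = act (pn n) x"
  using act_pn_pn by simp

lemma act_pn_norm: "norm (act (pn n) x) \<le> norm x"
  using act_norm[OF pn_in_A, of n x] seq_alg unfolding sequence_algebra_def by simp

lemma act_pn_after: "a \<in> A \<Longrightarrow> act (pn n) (act a x) = sm (a n) (act (pn n) x)"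
proof -
  assume a: "a \<in> A"
  have "(\<lambda>k. pn n k * a k) = (\<lambda>k. a n * pn n k)"
    by (auto simp: pn_def)
  then show ?thesis
    using act_mult[OF pn_in_A a, of n x] act_scal[OF pn_in_A] by simp
qed

lemma act_on_coord: "a \<in> A \<Longrightarrow> act a (act (pn n) x) = sm (a n) (act (pn n) x)"
proof -
  assume a: "a \<in> A"
  have "(\<lambda>k. a k * pn n k) = (\<lambda>k. a n * pn n k)"
    by (auto simp: pn_def)
  then show ?thesis
    using act_mult[OF a pn_in_A, of n x] act_scal[OF pn_in_A] by simp
qed

lemma homogeneous_decomp:
  assumes hom: "homogeneous_module act" and fin: "finite F"
    and outside: "\<And>n. n \<notin> F \<Longrightarrow> act (pn n) x = 0"
  shows "x = (\<Sum>n\<in>F. act (pn n) x)"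
proof -
  have "act (pn m) (x - (\<Sum>n\<in>F. act (pn n) x)) = 0" for m
  proof -
    have "act (pn m) (x - (\<Sum>n\<in>F. act (pn n) x)) =
        act (pn m) x - (\<Sum>n\<in>F. if m = n then act (pn n) x else 0)"
      by (simp add: act_diff[OF pn_in_A] act_sum[OF pn_in_A] act_pn_pn)
    also have "\<dots> = 0"
      using fin outside by (simp add: sum.delta)
    finally show ?thesis .
  qed
  then have "norm (x - (\<Sum>n\<in>F. act (pn n) x)) \<le> norm (0::'x)"
    using hom unfolding homogeneous_module_def by (metis act_zero pn_in_A order_refl)
  then show ?thesis by simp
qed

end

lemma morphism_bounded_linear: "module_morphism A s1 a1 s2 a2 f \<Longrightarrow> bounded_linear f"
  and morphism_sm: "module_morphism A s1 a1 s2 a2 f \<Longrightarrow> f (s1 c x) = s2 c (f x)"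
  and morphism_act: "module_morphism A s1 a1 s2 a2 f \<Longrightarrow> a \<in> A \<Longrightarrow> f (a1 a x) = a2 a (f x)"
  unfolding module_morphism_def by blast+

lemma morphism_linear: "module_morphism A s1 a1 s2 a2 f \<Longrightarrow> linear f"
  using morphism_bounded_linear bounded_linear.linear by blast

lemma coisometric_norm_le:
  assumes "bounded_linear \<tau>" and "coisometric \<tau>"
  shows "norm (\<tau> z) \<le> norm z"
proof -
  have "norm (\<tau> z) \<le> onorm \<tau> * norm z"
    using onorm[OF assms(1)] .
  also have "\<dots> \<le> 1 * norm z"
    using assms(2) unfolding coisometric_def by (intro mult_right_mono) auto
  finally show ?thesis by simp
qed

text \<open>Projecting an almost optimal preimage onto Y_n keeps it a
  preimage, because tau commutes with pn n.\<close>
lemma coordinate_lift: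
  assumes Y: "seq_module A nA smY actY"
    and mtau: "module_morphism A smY actY smX actX \<tau>" and ctau: "coisometric \<tau>"
    and x: "actX (pn n) x = x" and delta: "\<delta> > 0"
  shows "\<exists>y. \<tau> y = x \<and> actY (pn n) y = y \<and> norm y \<le> (1 + \<delta>) * norm x"
proof (cases "x = 0")
  case True
  then show ?thesis
    using Y linear_0[OF morphism_linear[OF mtau]]
    by (intro exI[of _ 0]) (simp add: seq_module.act_zero seq_module.pn_in_A)
next
  case False
  then have "\<delta> * norm x > 0" using delta by simp
  then obtain y0 where y0: "\<tau> y0 = x" "norm y0 < norm x + \<delta> * norm x"
    using ctau unfolding coisometric_def by blast
  have "\<tau> (actY (pn n) y0) = x"
    using y0(1) x morphism_act[OF mtau seq_module.pn_in_A[OF Y]] by metis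
  moreover have "norm (actY (pn n) y0) \<le> (1 + \<delta>) * norm x"
    using seq_module.act_pn_norm[OF Y, of n y0] y0(2) by (simp add: algebra_simps)
  ultimately show ?thesis
    using seq_module.act_pn_idem[OF Y] by (intro exI[of _ "actY (pn n) y0"]) simp
qed

lemma small_dilation:
  fixes K e :: real
  assumes "K \<ge> 0" and "e > 0"
  obtains \<delta> where "\<delta> > 0" and "(1 + \<delta>) * K < K + e"
proof
  show "e / (K + 1) > 0" using assms by simp
  have "e / (K + 1) * K < e"
    using assms by (simp add: field_simps)
  then show "(1 + e / (K + 1)) * K < K + e"
    by (simp add: algebra_simps)
qed

definition unit_vec :: "'l \<Rightarrow> 'l \<Rightarrow> complex" where
  "unit_vec l = (\<lambda>i. if i = l then 1 else 0)"

definition supp :: "('l \<Rightarrow> complex) \<Rightarrow> 'l set" where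
  "supp f = {i. f i \<noteq> 0}"

locale l10_charts = P: seq_module A nA smP actP
  for A nA and smP :: "complex \<Rightarrow> 'p::real_normed_vector \<Rightarrow> 'p" and actP +
  fixes T :: "nat \<Rightarrow> 'p \<Rightarrow> 'l \<Rightarrow> complex" and \<Lambda> :: "nat \<Rightarrow> 'l set"
  assumes T_bij: "\<And>n. bij_betw (T n) (range (actP (pn n))) (l10 (\<Lambda> n))"
    and T_add: "\<And>n u v. u \<in> range (actP (pn n)) \<Longrightarrow> v \<in> range (actP (pn n)) \<Longrightarrow>
        T n (u + v) = (\<lambda>i. T n u i + T n v i)"
    and T_sm: "\<And>n c u. u \<in> range (actP (pn n)) \<Longrightarrow> T n (smP c u) = (\<lambda>i. c * T n u i)"
    and T_norm: "\<And>n u. u \<in> range (actP (pn n)) \<Longrightarrow> l1norm (T n u) = norm u"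
begin

abbreviation S :: "nat \<Rightarrow> 'p set" where
  "S n \<equiv> range (actP (pn n))"

definition e :: "nat \<Rightarrow> 'l \<Rightarrow> 'p" where
  "e n l = inv_into (S n) (T n) (unit_vec l)"

lemma S_iff: "u \<in> S n \<longleftrightarrow> actP (pn n) u = u"
  by (metis P.act_pn_idem rangeE rangeI)

lemma S_add: "u \<in> S n \<Longrightarrow> v \<in> S n \<Longrightarrow> u + v \<in> S n"
  by (simp add: S_iff P.act_add[OF P.pn_in_A])

lemma S_sm: "u \<in> S n \<Longrightarrow> smP c u \<in> S n"
  by (simp add: S_iff P.act_sm[OF P.pn_in_A])

lemma S_zero: "0 \<in> S n"
  by (simp add: S_iff P.pn_in_A)

lemma S_sum: "(\<And>i. i \<in> F \<Longrightarrow> g i \<in> S n) \<Longrightarrow> sum g F \<in> S n"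
  by (induction F rule: infinite_finite_induct) (auto simp: S_zero S_add simp del: fun_upd_apply)

lemma T_zero: "T n 0 = (\<lambda>i. 0)"
proof -
  have "T n (0 + 0) = (\<lambda>i. T n 0 i + T n 0 i)"
    using T_add S_zero by blast
  then show ?thesis by (metis add.right_neutral add_cancel_right_right)
qed

lemma T_sum:
  "finite F \<Longrightarrow> (\<And>i. i \<in> F \<Longrightarrow> g i \<in> S n) \<Longrightarrow> T n (sum g F) = (\<lambda>j. \<Sum>i\<in>F. T n (g i) j)"
proof (induction F rule: finite_induct)
  case empty
  then show ?case by (simp add: T_zero)
next
  case (insert x F)
  have "T n (sum g (insert x F)) = T n (g x + sum g F)"
    using insert by simp
  also have "\<dots> = (\<lambda>i. T n (g x) i + T n (sum g F) i)"
    using insert by (intro T_add) (auto intro: S_sum)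
  finally show ?case using insert by simp
qed

lemma T_supp: "u \<in> S n \<Longrightarrow> finite (supp (T n u)) \<and> supp (T n u) \<subseteq> \<Lambda> n"
  using bij_betwE[OF T_bij] unfolding l10_def supp_def by blast

lemma norm_coeffs: "u \<in> S n \<Longrightarrow> norm u = (\<Sum>l\<in>supp (T n u). cmod (T n u l))"
  using T_norm unfolding l1norm_def supp_def by simp

lemma e_S: "l \<in> \<Lambda> n \<Longrightarrow> e n l \<in> S n"
  and T_e: "l \<in> \<Lambda> n \<Longrightarrow> T n (e n l) = unit_vec l"
proof -
  assume "l \<in> \<Lambda> n"
  then have "unit_vec l \<in> l10 (\<Lambda> n)"
    unfolding l10_def unit_vec_def by auto
  then show "e n l \<in> S n" and "T n (e n l) = unit_vec l"
    unfolding e_def using T_bij by (metis bij_betw_def inv_into_into f_inv_into_f)+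
qed

lemma e_norm: "l \<in> \<Lambda> n \<Longrightarrow> norm (e n l) = 1"
proof -
  assume l: "l \<in> \<Lambda> n"
  have "norm (e n l) = l1norm (unit_vec l)"
    using T_norm[OF e_S[OF l]] T_e[OF l] by simp
  also have "\<dots> = 1"
    unfolding l1norm_def unit_vec_def by simp
  finally show ?thesis .
qed

lemma pn_e: "l \<in> \<Lambda> n \<Longrightarrow> actP (pn m) (e n l) = (if m = n then e n l else 0)"
  using P.act_pn_pn e_S S_iff by metis

text \<open>Expansion of u in the basis e n, over any finite index set covering the
  support; injectivity of the chart reduces it to an identity of coefficients.\<close>
lemma expand:
  assumes u: "u \<in> S n" and F: "finite F" "supp (T n u) \<subseteq> F" "F \<subseteq> \<Lambda> n"
  shows "u = (\<Sum>l\<in>F. smP (T n u l) (e n l))"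
proof -
  have in_S: "(\<Sum>l\<in>F. smP (T n u l) (e n l)) \<in> S n"
    using F by (intro S_sum S_sm e_S) auto
  have "T n (\<Sum>l\<in>F. smP (T n u l) (e n l)) = (\<lambda>j. \<Sum>l\<in>F. T n (smP (T n u l) (e n l)) j)"
    using F by (intro T_sum) (auto intro: S_sm e_S)
  also have "\<dots> = (\<lambda>j. \<Sum>l\<in>F. T n u l * unit_vec l j)"
    using F by (intro ext sum.cong) (auto simp: T_sm e_S T_e)
  also have "\<dots> = T n u"
  proof
    fix j
    have "(\<Sum>l\<in>F. T n u l * unit_vec l j) = (if j \<in> F then T n u j else 0)"
      using F(1) by (simp add: unit_vec_def if_distrib sum.delta cong: if_cong)
    also have "\<dots> = T n u j"
      using F unfolding supp_def by auto
    finally show "(\<Sum>l\<in>F. T n u l * unit_vec l j) = T n u j" .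
  qed
  finally show ?thesis
    using in_S u T_bij unfolding bij_betw_def by (metis inj_onD)
qed

end

locale lifting =
  l10_charts A nA smP actP T \<Lambda> + X: seq_module A nA smX actX + Y: seq_module A nA smY actY
  for A nA and smP :: "complex \<Rightarrow> 'p::real_normed_vector \<Rightarrow> 'p" and actP
    and T :: "nat \<Rightarrow> 'p \<Rightarrow> 'l \<Rightarrow> complex" and \<Lambda> :: "nat \<Rightarrow> 'l set"
    and smX :: "complex \<Rightarrow> 'x::real_normed_vector \<Rightarrow> 'x" and actX
    and smY :: "complex \<Rightarrow> 'y::real_normed_vector \<Rightarrow> 'y" and actY +
  fixes \<tau> :: "'y \<Rightarrow> 'x" and \<phi> :: "'p \<Rightarrow> 'x" and y :: "nat \<Rightarrow> 'l \<Rightarrow> 'y" and \<delta> :: real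
  assumes hom_P: "homogeneous_module actP" and fin_P: "finite_type_module actP"
    and hom_Y: "homogeneous_module actY"
    and mtau: "module_morphism A smY actY smX actX \<tau>" and ctau: "coisometric \<tau>"
    and mphi: "module_morphism A smP actP smX actX \<phi>" and delta_pos: "\<delta> > 0"
    and y_tau: "\<And>n l. l \<in> \<Lambda> n \<Longrightarrow> \<tau> (y n l) = \<phi> (e n l)"
    and y_coord: "\<And>n l. l \<in> \<Lambda> n \<Longrightarrow> actY (pn n) (y n l) = y n l"
    and y_norm: "\<And>n l. l \<in> \<Lambda> n \<Longrightarrow> norm (y n l) \<le> (1 + \<delta>) * norm (\<phi> (e n l))"
begin

definition psi_coord :: "nat \<Rightarrow> 'p \<Rightarrow> 'y" where
  "psi_coord n u = (\<Sum>l\<in>supp (T n u). smY (T n u l) (y n l))"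

lemma psi_coord_superset:
  assumes "finite F" "supp (T n u) \<subseteq> F"
  shows "psi_coord n u = (\<Sum>l\<in>F. smY (T n u l) (y n l))"
  unfolding psi_coord_def using assms by (intro sum.mono_neutral_left) (auto simp: supp_def)

lemma psi_coord_zero: "psi_coord n 0 = 0"
  unfolding psi_coord_def by (simp add: T_zero supp_def)

lemma psi_coord_add:
  assumes u: "u \<in> S n" and v: "v \<in> S n"
  shows "psi_coord n (u + v) = psi_coord n u + psi_coord n v"
proof -
  let ?F = "supp (T n u) \<union> supp (T n v)"
  have fin: "finite ?F" using T_supp u v by blast
  have "psi_coord n (u + v) = (\<Sum>l\<in>?F. smY (T n (u + v) l) (y n l))"
    using fin T_add[OF u v] by (intro psi_coord_superset) (auto simp: supp_def)
  also have "\<dots> = (\<Sum>l\<in>?F. smY (T n u l) (y n l)) + (\<Sum>l\<in>?F. smY (T n v l) (y n l))"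
    by (simp add: T_add[OF u v] Y.sm_addl sum.distrib)
  also have "\<dots> = psi_coord n u + psi_coord n v"
    using psi_coord_superset[OF fin] by simp
  finally show ?thesis .
qed

lemma psi_coord_sm:
  assumes u: "u \<in> S n"
  shows "psi_coord n (smP c u) = smY c (psi_coord n u)"
proof -
  have "psi_coord n (smP c u) = (\<Sum>l\<in>supp (T n u). smY (T n (smP c u) l) (y n l))"
    using T_supp[OF u] T_sm[OF u] by (intro psi_coord_superset) (auto simp: supp_def)
  also have "\<dots> = smY c (psi_coord n u)"
    by (simp add: T_sm[OF u] Y.sm_mult Y.sm_sum psi_coord_def)
  finally show ?thesis .
qed

lemma psi_coord_in_coord:
  assumes u: "u \<in> S n"
  shows "actY (pn n) (psi_coord n u) = psi_coord n u"
proof -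
  have "actY (pn n) (psi_coord n u) = (\<Sum>l\<in>supp (T n u). smY (T n u l) (actY (pn n) (y n l)))"
    unfolding psi_coord_def by (simp add: Y.act_sum[OF Y.pn_in_A] Y.act_sm[OF Y.pn_in_A])
  also have "\<dots> = psi_coord n u"
    unfolding psi_coord_def using T_supp[OF u] y_coord by (intro sum.cong) auto
  finally show ?thesis .
qed

lemma psi_coord_tau:
  assumes u: "u \<in> S n"
  shows "\<tau> (psi_coord n u) = \<phi> u"
proof -
  let ?F = "supp (T n u)"
  have F: "finite ?F" "?F \<subseteq> \<Lambda> n" using T_supp[OF u] by auto
  have "\<tau> (psi_coord n u) = (\<Sum>l\<in>?F. \<tau> (smY (T n u l) (y n l)))"
    unfolding psi_coord_def using linear_sum[OF morphism_linear[OF mtau]] by blast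
  also have "\<dots> = (\<Sum>l\<in>?F. \<phi> (smP (T n u l) (e n l)))"
    using F by (intro sum.cong) (auto simp: morphism_sm[OF mtau] morphism_sm[OF mphi] y_tau)
  also have "\<dots> = \<phi> (\<Sum>l\<in>?F. smP (T n u l) (e n l))"
    using linear_sum[OF morphism_linear[OF mphi]] by metis
  also have "\<dots> = \<phi> u" using expand[OF u F(1) _ F(2)] by simp
  finally show ?thesis .
qed

text \<open>The key norm estimate on one coordinate: psi_coord n u is bounded by
  (1 + delta) |u| times |phi (e n l)| for a single basis index l, namely one
  where |phi (e n l)| is maximal on the support of u.\<close>
lemma psi_coord_peak:
  assumes u: "u \<in> S n" and nz: "u \<noteq> 0"
  shows "\<exists>l\<in>\<Lambda> n. norm (psi_coord n u) \<le> (1 + \<delta>) * (norm u * norm (\<phi> (e n l)))"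
proof -
  let ?F = "supp (T n u)" and ?g = "\<lambda>l. norm (\<phi> (e n l))"
  have F: "finite ?F" "?F \<subseteq> \<Lambda> n" using T_supp[OF u] by auto
  have "?F \<noteq> {}" using norm_coeffs[OF u] nz by auto
  then have "Max (?g ` ?F) \<in> ?g ` ?F" using F(1) by (intro Max_in) auto
  then obtain l where l: "l \<in> ?F" and l_Max: "?g l = Max (?g ` ?F)" by auto
  have l_max: "?g l' \<le> ?g l" if "l' \<in> ?F" for l'
    unfolding l_Max using F(1) that by (intro Max_ge) auto
  have "norm (psi_coord n u) \<le> (\<Sum>l'\<in>?F. norm (smY (T n u l') (y n l')))"
    unfolding psi_coord_def by (rule norm_sum)
  also have "\<dots> \<le> (\<Sum>l'\<in>?F. cmod (T n u l') * ((1 + \<delta>) * ?g l))"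
  proof (rule sum_mono)
    fix l' assume l': "l' \<in> ?F"
    have "norm (y n l') \<le> (1 + \<delta>) * ?g l"
      using y_norm[of l' n] l_max[OF l'] F(2) l' delta_pos by (smt (verit) mult_left_mono subsetD)
    then show "norm (smY (T n u l') (y n l')) \<le> cmod (T n u l') * ((1 + \<delta>) * ?g l)"
      by (simp add: Y.sm_norm mult_left_mono)
  qed
  also have "\<dots> = (1 + \<delta>) * (norm u * ?g l)"
    unfolding norm_coeffs[OF u] sum_distrib_right by (simp add: sum_distrib_left mult_ac)
  finally show ?thesis using l F(2) by blast
qed

definition coord_supp :: "'p \<Rightarrow> nat set" where
  "coord_supp x = {n. actP (pn n) x \<noteq> 0}"

definition psi :: "'p \<Rightarrow> 'y" where
  "psi x = (\<Sum>n\<in>coord_supp x. psi_coord n (actP (pn n) x))"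

lemma finite_coord_supp: "finite (coord_supp x)"
proof -
  obtain N where "\<forall>n\<ge>N. actP (pn n) x = 0"
    using fin_P unfolding finite_type_module_def by blast
  then have "coord_supp x \<subseteq> {..<N}"
    unfolding coord_supp_def using not_less by auto
  then show ?thesis using finite_subset by blast
qed

lemma psi_superset:
  "finite F \<Longrightarrow> coord_supp x \<subseteq> F \<Longrightarrow> psi x = (\<Sum>n\<in>F. psi_coord n (actP (pn n) x))"
  unfolding psi_def by (intro sum.mono_neutral_left) (auto simp: coord_supp_def psi_coord_zero)

lemma coord_in_S: "actP (pn n) x \<in> S n"
  by simp

lemma pn_psi: "actY (pn m) (psi x) = psi_coord m (actP (pn m) x)"
proof -
  let ?F = "insert m (coord_supp x)"
  have fin: "finite ?F" using finite_coord_supp by simp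
  have "actY (pn m) (psi x) = (\<Sum>n\<in>?F. actY (pn m) (psi_coord n (actP (pn n) x)))"
    unfolding psi_superset[OF fin subset_insertI] by (rule Y.act_sum[OF Y.pn_in_A])
  also have "\<dots> = (\<Sum>n\<in>?F. if m = n then psi_coord n (actP (pn n) x) else 0)"
    using Y.act_pn_pn psi_coord_in_coord[OF coord_in_S] by (intro sum.cong refl) metis
  also have "\<dots> = psi_coord m (actP (pn m) x)"
    using fin by (simp add: sum.delta)
  finally show ?thesis .
qed

lemma psi_add: "psi (x + z) = psi x + psi z"
proof -
  let ?F = "coord_supp x \<union> coord_supp z \<union> coord_supp (x + z)"
  have fin: "finite ?F" using finite_coord_supp by simp
  have "psi (x + z) = (\<Sum>n\<in>?F. psi_coord n (actP (pn n) x) + psi_coord n (actP (pn n) z))"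
    by (subst psi_superset[OF fin]) (auto simp: P.act_add[OF P.pn_in_A] psi_coord_add)
  also have "\<dots> = psi x + psi z"
    by (subst (1 2) psi_superset[OF fin]) (auto simp: sum.distrib)
  finally show ?thesis .
qed

lemma psi_sm: "psi (smP c x) = smY c (psi x)"
proof -
  let ?F = "coord_supp x \<union> coord_supp (smP c x)"
  have fin: "finite ?F" using finite_coord_supp by simp
  have "psi (smP c x) = (\<Sum>n\<in>?F. smY c (psi_coord n (actP (pn n) x)))"
    by (subst psi_superset[OF fin]) (auto simp: P.act_sm[OF P.pn_in_A] psi_coord_sm)
  also have "\<dots> = smY c (psi x)"
    by (subst psi_superset[OF fin]) (auto simp: Y.sm_sum)
  finally show ?thesis .
qed

lemma psi_act:
  assumes a: "a \<in> A"
  shows "psi (actP a x) = actY a (psi x)"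
proof -
  let ?F = "coord_supp x \<union> coord_supp (actP a x)"
  have fin: "finite ?F" using finite_coord_supp by simp
  have "psi (actP a x) = (\<Sum>n\<in>?F. smY (a n) (psi_coord n (actP (pn n) x)))"
    by (subst psi_superset[OF fin]) (auto simp: P.act_pn_after[OF a] psi_coord_sm)
  also have "\<dots> = (\<Sum>n\<in>?F. actY a (psi_coord n (actP (pn n) x)))"
    using Y.act_on_coord[OF a] psi_coord_in_coord[OF coord_in_S] by (intro sum.cong refl) metis
  also have "\<dots> = actY a (psi x)"
    by (subst psi_superset[OF fin]) (auto simp: Y.act_sum[OF a])
  finally show ?thesis .
qed

lemma psi_tau: "\<tau> (psi x) = \<phi> x"
proof -
  have "\<tau> (psi x) = (\<Sum>n\<in>coord_supp x. \<tau> (psi_coord n (actP (pn n) x)))"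
    unfolding psi_def by (rule linear_sum[OF morphism_linear[OF mtau]])
  also have "\<dots> = \<phi> (\<Sum>n\<in>coord_supp x. actP (pn n) x)"
    by (simp add: psi_coord_tau linear_sum[OF morphism_linear[OF mphi]])
  also have "(\<Sum>n\<in>coord_supp x. actP (pn n) x) = x"
    using P.homogeneous_decomp[OF hom_P finite_coord_supp] unfolding coord_supp_def by auto
  finally show ?thesis .
qed


text \<open>Peak vector: x' has coordinates of the same norms as x, and its n-th
  coordinate is |x_n| times a basis vector e n l at which the bound of
  psi_coord_peak is attained.\<close>
lemma peak_vector:
  obtains x' where "\<And>m. norm (actP (pn m) x') = norm (actP (pn m) x)"
    and "\<And>m. norm (psi_coord m (actP (pn m) x)) \<le> (1 + \<delta>) * norm (\<phi> (actP (pn m) x'))"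
proof -
  let ?xn = "\<lambda>n. actP (pn n) x"
  have "\<forall>n\<in>coord_supp x. \<exists>l\<in>\<Lambda> n.
      norm (psi_coord n (?xn n)) \<le> (1 + \<delta>) * (norm (?xn n) * norm (\<phi> (e n l)))"
    using psi_coord_peak[OF coord_in_S] unfolding coord_supp_def by blast
  then obtain lm where lm: "\<And>n. n \<in> coord_supp x \<Longrightarrow> lm n \<in> \<Lambda> n \<and>
      norm (psi_coord n (?xn n)) \<le> (1 + \<delta>) * (norm (?xn n) * norm (\<phi> (e n (lm n))))"
    by metis
  define x' where "x' = (\<Sum>n\<in>coord_supp x. smP (complex_of_real (norm (?xn n))) (e n (lm n)))"
  have coord_x': "actP (pn m) x' =
      (if m \<in> coord_supp x then smP (complex_of_real (norm (?xn m))) (e m (lm m)) else 0)" for m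
  proof -
    have "actP (pn m) x' = (\<Sum>n\<in>coord_supp x.
        if m = n then smP (complex_of_real (norm (?xn n))) (e n (lm n)) else 0)"
      unfolding x'_def using lm
      by (auto simp: P.act_sum[OF P.pn_in_A] P.act_sm[OF P.pn_in_A] pn_e intro!: sum.cong)
    then show ?thesis
      using finite_coord_supp by (simp add: sum.delta)
  qed
  show ?thesis
  proof
    show "norm (actP (pn m) x') = norm (?xn m)" for m
      using coord_x' lm by (auto simp: P.sm_norm e_norm coord_supp_def)
    show "norm (psi_coord m (?xn m)) \<le> (1 + \<delta>) * norm (\<phi> (actP (pn m) x'))" for m
    proof (cases "m \<in> coord_supp x")
      case True
      then show ?thesis
        using coord_x' lm by (simp add: morphism_sm[OF mphi] X.sm_norm)
    next
      case False
      then show ?thesis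
        using delta_pos unfolding coord_supp_def by (simp add: psi_coord_zero)
    qed
  qed
qed

lemma cmod_dilation: "cmod (1 + complex_of_real \<delta>) = 1 + \<delta>"
  using delta_pos by (metis abs_of_pos add_pos_pos norm_of_real of_real_1 of_real_add zero_less_one)

text \<open>Norm estimate up to eta: an eta-optimal preimage w of phi x' dominates
  psi x / (1 + delta) in every coordinate, so homogeneity of Y applies.\<close>
lemma psi_norm_eta:
  assumes eta: "\<eta> > 0"
  shows "norm (psi x) \<le> (1 + \<delta>) * (onorm \<phi> * norm x + \<eta>)"
proof -
  obtain x' where same_norms: "\<And>m. norm (actP (pn m) x') = norm (actP (pn m) x)"
    and peak: "\<And>m. norm (psi_coord m (actP (pn m) x)) \<le> (1 + \<delta>) * norm (\<phi> (actP (pn m) x'))"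
    using peak_vector[where x = x] by blast
  have "norm x' \<le> norm x"
    using hom_P same_norms unfolding homogeneous_module_def by simp
  obtain w where w: "\<tau> w = \<phi> x'" "norm w < norm (\<phi> x') + \<eta>"
    using ctau eta unfolding coisometric_def by blast
  have "norm (\<phi> x') \<le> onorm \<phi> * norm x'"
    using onorm[OF morphism_bounded_linear[OF mphi]] .
  also have "\<dots> \<le> onorm \<phi> * norm x"
    using \<open>norm x' \<le> norm x\<close> onorm_pos_le[OF morphism_bounded_linear[OF mphi]]
    by (rule mult_left_mono)
  finally have w_le: "norm w \<le> onorm \<phi> * norm x + \<eta>" using w by simp
  let ?w = "smY (complex_of_real (1 + \<delta>)) w"
  have "norm (actY (pn m) (psi x)) \<le> norm (actY (pn m) ?w)" for m
  proof -
    have "norm (actY (pn m) (psi x)) \<le> (1 + \<delta>) * norm (\<phi> (actP (pn m) x'))"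
      using peak by (simp add: pn_psi)
    also have "\<phi> (actP (pn m) x') = \<tau> (actY (pn m) w)"
      by (simp add: morphism_act[OF mphi P.pn_in_A] morphism_act[OF mtau Y.pn_in_A] w(1))
    also have "(1 + \<delta>) * norm (\<tau> (actY (pn m) w)) \<le> (1 + \<delta>) * norm (actY (pn m) w)"
      using coisometric_norm_le[OF morphism_bounded_linear[OF mtau] ctau] delta_pos
      by (intro mult_left_mono) auto
    also have "\<dots> = norm (actY (pn m) ?w)"
      by (simp add: Y.act_sm[OF Y.pn_in_A] Y.sm_norm cmod_dilation)
    finally show ?thesis .
  qed
  then have "norm (psi x) \<le> norm ?w"
    using hom_Y unfolding homogeneous_module_def by blast
  also have "\<dots> = (1 + \<delta>) * norm w"
    by (simp add: Y.sm_norm cmod_dilation)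
  also have "\<dots> \<le> (1 + \<delta>) * (onorm \<phi> * norm x + \<eta>)"
    using w_le delta_pos by (intro mult_left_mono) auto
  finally show ?thesis .
qed

lemma psi_norm: "norm (psi x) \<le> (1 + \<delta>) * onorm \<phi> * norm x"
proof -
  have "norm (psi x) / (1 + \<delta>) \<le> onorm \<phi> * norm x"
  proof (rule field_le_epsilon)
    fix \<eta> :: real
    assume "\<eta> > 0"
    then show "norm (psi x) / (1 + \<delta>) \<le> onorm \<phi> * norm x + \<eta>"
      using psi_norm_eta[of \<eta> x] delta_pos by (simp add: divide_simps mult.commute)
  qed
  then show ?thesis
    using delta_pos by (simp add: divide_simps mult_ac)
qed

lemma psi_morphism: "module_morphism A smP actP smY actY psi"
  unfolding module_morphism_def
proof (intro conjI allI ballI)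
  show "bounded_linear psi"
  proof (rule bounded_linear_intro)
    show "psi (x + z) = psi x + psi z" for x z
      by (rule psi_add)
    show "psi (r *\<^sub>R x) = r *\<^sub>R psi x" for r x
      using psi_sm[of "complex_of_real r" x] by (simp add: P.sm_real Y.sm_real)
    show "norm (psi x) \<le> norm x * ((1 + \<delta>) * onorm \<phi>)" for x
      using psi_norm[of x] by (simp add: mult_ac)
  qed
  show "psi (smP c x) = smY c (psi x)" for c x
    by (rule psi_sm)
  show "psi (actP a x) = actY a (psi x)" if "a \<in> A" for a x
    using psi_act[OF that] .
qed

lemma psi_lifts: "\<tau> \<circ> psi = \<phi>"
  using psi_tau by auto

lemma psi_onorm: "onorm psi \<le> (1 + \<delta>) * onorm \<phi>"
  using psi_norm delta_pos onorm_pos_le[OF morphism_bounded_linear[OF mphi]]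
  by (intro onorm_bound) auto

end
theorem theorem3p1:
  fixes A :: "(nat \<Rightarrow> complex) set" and nA :: "(nat \<Rightarrow> complex) \<Rightarrow> real"
    and smP :: "complex \<Rightarrow> 'p::real_normed_vector \<Rightarrow> 'p"
    and actP :: "(nat \<Rightarrow> complex) \<Rightarrow> 'p \<Rightarrow> 'p"
    and \<Lambda> :: "nat \<Rightarrow> 'l set"
    and smX :: "complex \<Rightarrow> 'x::real_normed_vector \<Rightarrow> 'x"
    and actX :: "(nat \<Rightarrow> complex) \<Rightarrow> 'x \<Rightarrow> 'x"
    and smY :: "complex \<Rightarrow> 'y::real_normed_vector \<Rightarrow> 'y"
    and actY :: "(nat \<Rightarrow> complex) \<Rightarrow> 'y \<Rightarrow> 'y"
  assumes "sequence_algebra A nA"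
    and "normed_module A nA smP actP"
    and "homogeneous_module actP"
    and "finite_type_module actP"
    and "\<forall>n. isometric_iso_l10 smP (range (actP (pn n))) (\<Lambda> n)"
    and "normed_module A nA smX actX" and "essential_module A actX" and "homogeneous_module actX"
    and "normed_module A nA smY actY" and "essential_module A actY" and "homogeneous_module actY"
  shows "extremely_projective_wrt A nA smP actP smX actX smY actY"
  unfolding extremely_projective_wrt_def
proof (intro allI impI, elim conjE)
  fix \<tau> :: "'y \<Rightarrow> 'x" and \<phi> :: "'p \<Rightarrow> 'x" and e :: real
  assume mtau: "module_morphism A smY actY smX actX \<tau>" and ctau: "coisometric \<tau>"
    and mphi: "module_morphism A smP actP smX actX \<phi>" and e: "e > 0"
  have P: "seq_module A nA smP actP" and X: "seq_module A nA smX actX"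
    and Y: "seq_module A nA smY actY"
    using assms by (simp_all add: seq_module_def)
  obtain T where "\<forall>n. bij_betw (T n) (range (actP (pn n))) (l10 (\<Lambda> n)) \<and>
      (\<forall>u\<in>range (actP (pn n)). \<forall>v\<in>range (actP (pn n)). T n (u + v) = (\<lambda>i. T n u i + T n v i)) \<and>
      (\<forall>c. \<forall>u\<in>range (actP (pn n)). T n (smP c u) = (\<lambda>i. c * T n u i)) \<and>
      (\<forall>u\<in>range (actP (pn n)). l1norm (T n u) = norm u)"
    using choice[OF assms(5)[unfolded isometric_iso_l10_def]] by blast
  then interpret C: l10_charts A nA smP actP T \<Lambda>
    using P unfolding l10_charts_def l10_charts_axioms_def by blast
  obtain \<delta> where \<delta>: "\<delta> > 0" "(1 + \<delta>) * onorm \<phi> < onorm \<phi> + e"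
    using small_dilation[OF onorm_pos_le[OF morphism_bounded_linear[OF mphi]] e] by blast
  have "\<forall>n l. \<exists>y. l \<in> \<Lambda> n \<longrightarrow> \<tau> y = \<phi> (C.e n l) \<and> actY (pn n) y = y \<and>
      norm y \<le> (1 + \<delta>) * norm (\<phi> (C.e n l))"
    using coordinate_lift[OF Y mtau ctau _ \<delta>(1)] C.e_S C.S_iff
      morphism_act[OF mphi seq_module.pn_in_A[OF P]] by metis
  then obtain y where "\<And>n l. l \<in> \<Lambda> n \<Longrightarrow> \<tau> (y n l) = \<phi> (C.e n l) \<and>
      actY (pn n) (y n l) = y n l \<and> norm (y n l) \<le> (1 + \<delta>) * norm (\<phi> (C.e n l))"
    by metis
  then interpret L: lifting A nA smP actP T \<Lambda> smX actX smY actY \<tau> \<phi> y \<delta>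
    using assms X Y mtau ctau mphi \<delta>(1) by unfold_locales auto
  show "\<exists>\<psi>. module_morphism A smP actP smY actY \<psi> \<and> \<tau> \<circ> \<psi> = \<phi> \<and> onorm \<psi> < onorm \<phi> + e"
    using L.psi_morphism L.psi_lifts L.psi_onorm \<delta>(2) by fastforce
qed

end
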